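(* If $M\le 2N-2$, then for every $M$-element frame $\mathcal F$ for $\mathbb R^N$ the map $\mathbb M^{\mathcal F}$ is not injective.
   Context: A frame for $\mathbb R^N$ is a spanning family $\{f_1,\dots,f_M\}$. $\mathbb M^{\mathcal F}:\mathbb R^N/\{\pm1\}\to\mathbb R^M$, $\hat x\mapsto(|\langle x,f_k\rangle|)_k$; injectivity means $|\langle x,f_k\rangle|=|\langle y,f_k\rangle|$ for all $k$ implies $y=\pm x$. *)

theory Defs
  imports "HOL-Analysis.Analysis"
begin

definition is_frame :: "nat \<Rightarrow> (nat \<Rightarrow> real ^ 'n) \<Rightarrow> bool" where
  "is_frame M f \<longleftrightarrow> span (f ` {..<M}) = UNIV"

text \<open>Injectivity of the phaseless map on R^N / {+-1}:
  equal absolute frame coefficients imply y = x or y = -x.\<close>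
definition phase_retrievable :: "nat \<Rightarrow> (nat \<Rightarrow> real ^ 'n) \<Rightarrow> bool" where
  "phase_retrievable M f \<longleftrightarrow>
     (\<forall>x y :: real ^ 'n. (\<forall>k<M. \<bar>x \<bullet> f k\<bar> = \<bar>y \<bullet> f k\<bar>) \<longrightarrow> y = x \<or> y = - x)"

end

theory Submission
  imports Defs
begin

text \<open>Split the M \<le> 2N - 2 indices into two sets of at most N - 1 indices each. Neither
  half spans R^N, so there are nonzero u and v with u orthogonal to the first half and v to
  the second. Then u + v and u - v have the same absolute coefficients against every f k,
  although neither equals plus or minus the other.\<close>

lemma exists_nonzero_orthogonal_to_few:
  fixes f :: "'i \<Rightarrow> 'a::euclidean_space"
  assumes "finite A" and "card A < DIM('a)"
  obtains u where "u \<noteq> 0" and "\<And>k. k \<in> A \<Longrightarrow> u \<bullet> f k = 0"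
proof -
  have "dim (f ` A) \<le> card (f ` A)"
    using \<open>finite A\<close> by (intro dim_le_card) (auto intro: span_base)
  also have "\<dots> \<le> card A"
    using \<open>finite A\<close> by (rule card_image_le)
  finally have "dim (f ` A) < DIM('a)"
    using assms(2) by linarith
  then obtain u where "u \<noteq> 0" and "\<And>y. y \<in> span (f ` A) \<Longrightarrow> orthogonal u y"
    using orthogonal_to_subspace_exists by blast
  then show thesis
    using that by (metis image_eqI orthogonal_def span_base)
qed

lemma not_phase_retrievable_if_orthogonal_split:
  fixes f :: "nat \<Rightarrow> real ^ 'n"
  assumes "{..<M} \<subseteq> A \<union> B"
    and "u \<noteq> 0" and "\<And>k. k \<in> A \<Longrightarrow> u \<bullet> f k = 0"
    and "v \<noteq> 0" and "\<And>k. k \<in> B \<Longrightarrow> v \<bullet> f k = 0"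
  shows "\<not> phase_retrievable M f"
proof
  assume "phase_retrievable M f"
  moreover have "\<forall>k<M. \<bar>(u + v) \<bullet> f k\<bar> = \<bar>(u - v) \<bullet> f k\<bar>"
    using assms(1,3,5) by (auto simp: inner_add_left inner_diff_left)
  ultimately have "u - v = u + v \<or> u - v = - (u + v)"
    unfolding phase_retrievable_def by blast
  then have "2 *\<^sub>R v = 0 \<or> 2 *\<^sub>R u = 0"
    by (auto simp: algebra_simps scaleR_2)
  with assms(2,4) show False
    by auto
qed

lemma not_phase_retrievable_if_covered_by_small_sets:
  fixes f :: "nat \<Rightarrow> real ^ 'n"
  assumes "{..<M} \<subseteq> A \<union> B"
    and "finite A" and "card A < CARD('n)"
    and "finite B" and "card B < CARD('n)"
  shows "\<not> phase_retrievable M f"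
proof -
  obtain u where "u \<noteq> 0" and "\<And>k. k \<in> A \<Longrightarrow> u \<bullet> f k = 0"
    using exists_nonzero_orthogonal_to_few[where f = f] assms(2,3) by auto
  moreover obtain v where "v \<noteq> 0" and "\<And>k. k \<in> B \<Longrightarrow> v \<bullet> f k = 0"
    using exists_nonzero_orthogonal_to_few[where f = f] assms(4,5) by auto
  ultimately show ?thesis
    by (rule not_phase_retrievable_if_orthogonal_split[OF assms(1)])
qed

theorem proposition2p5:
  fixes f :: "nat \<Rightarrow> real ^ 'n" and M :: nat
  assumes "M \<le> 2 * CARD('n) - 2"
    and "is_frame M f"
  shows "\<not> phase_retrievable M f"
proof (rule not_phase_retrievable_if_covered_by_small_sets)
  let ?N = "CARD('n)"
  show "{..<M} \<subseteq> {..<?N - 1} \<union> {?N - 1..<M}"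
    by auto
  show "card {..<?N - 1} < ?N"
    by simp
  have "?N > 0" and "card {?N - 1..<M} = M - (?N - 1)"
    by simp_all
  with assms(1) show "card {?N - 1..<M} < ?N"
    by linarith
qed auto

end
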